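(* Uniformly for all real $\alpha\geqslant 3$ and $x>1$, $$\sum_{p\leqslant x}\frac{1}{(\log p)^\alpha}<(2\alpha)^\alpha\frac{x}{(\log x)^{\alpha+1}},$$ where the sum runs over primes $p$. *)

theory Defs
  imports Complex_Main "HOL-Computational_Algebra.Primes"
begin

end

theory Submission
  imports Defs "HOL-Analysis.Harmonic_Numbers"
begin

(* Split the primes p <= x at y = x^(1/3).  For p > y each term satisfies
   1/(log p)^a <= log p / (log y)^(a+1), so these primes contribute at most
   theta(x) / (log x / 3)^(a+1), and Chebyshev's bound theta(x) <= x log 4 (from the
   product of the primes in (m+1, 2m+1] dividing binomial(2m+1, m) <= 4^m) makes this
   3^(a+1) x log 4 / (log x)^(a+1).  The at most y primes p <= y contribute at most
   y / (log 2)^a, and log u <= u / e applied to u = x^(2/(3(a+1))) gives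
   (log x)^(a+1) y <= (3(a+1)/(2e))^(a+1) x.  For a >= 3 the two resulting constants
   are at most 25/48 and 125/288 times (2a)^a. *)

lemma central_binomial_odd_le: "(2*m+1 choose m) \<le> 4^m"
proof -
  have "2 * (2*m+1 choose m) = (\<Sum>k\<in>{m, m+1}. (2*m+1 choose k))"
    using binomial_symmetric[of m "2*m+1"] by simp
  also have "\<dots> \<le> (\<Sum>k\<le>2*m+1. (2*m+1 choose k))"
    by (intro sum_mono2) auto
  also have "\<dots> = 2 ^ (2*m+1)"
    by (rule choose_row_sum)
  finally show ?thesis
    by (simp add: power_mult)
qed

lemma prime_dvd_binomial:
  fixes p n k :: nat
  assumes "prime p" "k \<le> n" "k < p" "n - k < p" "p \<le> n"
  shows "p dvd (n choose k)"
proof -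
  have "fact k * fact (n - k) * (n choose k) = (fact n :: nat)"
    using binomial_fact_lemma[OF \<open>k \<le> n\<close>] by simp
  moreover have "p dvd fact n" "\<not> p dvd fact k * fact (n - k)"
    using assms by (auto simp: prime_dvd_fact_iff prime_dvd_mult_iff)
  ultimately show ?thesis
    using \<open>prime p\<close> by (metis prime_dvd_mult_iff)
qed

lemma prod_primes_dvd:
  fixes A :: "'a :: factorial_semiring_gcd set"
  assumes "finite A" "\<And>p. p \<in> A \<Longrightarrow> prime p \<and> p dvd n"
  shows "\<Prod>A dvd n"
  using assms
proof (induction A rule: finite_induct)
  case (insert p A)
  have "\<not> p dvd \<Prod>A"
  proof
    assume "p dvd \<Prod>A"
    then obtain q where "q \<in> A" "p dvd q"
      using insert by (auto simp: prime_dvd_prod_iff)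
    then show False
      using insert by (metis insertCI primes_dvd_imp_eq)
  qed
  then have "coprime p (\<Prod>A)"
    using insert by (intro prime_imp_coprime) auto
  then show ?case
    using insert by (simp add: divides_mult)
qed simp

definition primorial :: "nat \<Rightarrow> nat" where
  "primorial n = \<Prod>{p. prime p \<and> p \<le> n}"

lemma primorial_pos: "primorial n > 0"
  unfolding primorial_def by (intro prod_pos) (auto simp: prime_gt_0_nat)

lemma primorial_0 [simp]: "primorial 0 = 1"
proof -
  have "{p::nat. prime p \<and> p \<le> 0} = {}"
    by auto
  then show ?thesis
    unfolding primorial_def by (simp del: Collect_empty_eq)
qed

lemma primorial_Suc:
  "primorial (Suc n) = (if prime (Suc n) then Suc n * primorial n else primorial n)"
proof -
  have "{p. prime p \<and> p \<le> Suc n} = {p. prime p \<and> p \<le> n} \<union> {p. prime p \<and> p = Suc n}"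
    by (auto simp: le_Suc_eq)
  then show ?thesis
    unfolding primorial_def by (auto simp: Collect_conj_eq)
qed

lemma primorial_odd:
  "primorial (2*m+1) = primorial (m+1) * \<Prod>{p. prime p \<and> m+1 < p \<and> p \<le> 2*m+1}"
proof -
  have "{p. prime p \<and> p \<le> 2*m+1}
      = {p. prime p \<and> p \<le> m+1} \<union> {p. prime p \<and> m+1 < p \<and> p \<le> 2*m+1}"
    by auto
  then show ?thesis
    unfolding primorial_def by (subst prod.union_disjoint[symmetric]) auto
qed

lemma prod_primes_between_le: "\<Prod>{p. prime p \<and> m+1 < p \<and> p \<le> 2*m+1} \<le> 4^m"
proof -
  have "\<Prod>{p. prime p \<and> m+1 < p \<and> p \<le> 2*m+1} dvd (2*m+1 choose m)"
    by (intro prod_primes_dvd prime_dvd_binomial conjI) auto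
  then have "\<Prod>{p. prime p \<and> m+1 < p \<and> p \<le> 2*m+1} \<le> (2*m+1 choose m)"
    by (rule dvd_imp_le) simp
  also have "\<dots> \<le> 4^m"
    by (rule central_binomial_odd_le)
  finally show ?thesis .
qed

lemma primorial_le_4_pow: "primorial n \<le> 4^n"
proof (induction n rule: less_induct)
  case (less n)
  consider "n \<le> 2" | "even n" "n > 2" | m where "n = 2*m+1" "m \<ge> 1"
  proof (cases "even n")
    case False
    then obtain m where "n = 2*m+1"
      by (rule oddE)
    then show ?thesis
      using that by (cases "m = 0") auto
  next
    case True
    then show ?thesis
      using that by (cases "n \<le> 2") auto
  qed
  then show ?case
  proof cases
    case 1
    then consider "n = 0" | "n = 1" | "n = 2"
      by linarith
    then show ?thesis
      using primorial_Suc[of 0] primorial_Suc[of 1] by cases (simp_all add: numeral_2_eq_2)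
  next
    case 2
    then have "\<not> prime n"
      using prime_odd_nat by auto
    then have "primorial n = primorial (n - 1)"
      using primorial_Suc[of "n - 1"] \<open>n > 2\<close> by simp
    also have "\<dots> \<le> 4^(n - 1)"
      using less.IH \<open>n > 2\<close> by simp
    also have "\<dots> \<le> 4^n"
      by simp
    finally show ?thesis .
  next
    case 3
    have "primorial n = primorial (m+1) * \<Prod>{p. prime p \<and> m+1 < p \<and> p \<le> 2*m+1}"
      using \<open>n = 2*m+1\<close> by (simp only: primorial_odd)
    also have "\<dots> \<le> 4^(m+1) * 4^m"
      using less.IH[of "m+1"] 3 by (intro mult_le_mono prod_primes_between_le) simp
    also have "\<dots> = 4^n"
      using 3 by (simp add: power_add[symmetric])
    finally show ?thesis .
  qed
qed

lemma sum_ln_primes_le: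
  fixes x :: real
  assumes "x \<ge> 0"
  shows "(\<Sum>p\<in>{p::nat. prime p \<and> real p \<le> x}. ln (real p)) \<le> ln 4 * x"
proof -
  define n where "n = nat \<lfloor>x\<rfloor>"
  have "{p::nat. prime p \<and> real p \<le> x} = {p. prime p \<and> p \<le> n}"
    unfolding n_def using assms by (auto simp: le_nat_iff le_floor_iff)
  then have "(\<Sum>p\<in>{p::nat. prime p \<and> real p \<le> x}. ln (real p))
      = ln (\<Prod>p\<in>{p. prime p \<and> p \<le> n}. real p)"
    by (subst ln_prod) (auto dest: prime_gt_0_nat)
  also have "\<dots> = ln (real (primorial n))"
    by (simp add: primorial_def)
  also have "\<dots> \<le> ln (4 ^ n)"
  proof -
    have "real (primorial n) \<le> 4 ^ n"
      using primorial_le_4_pow[of n] by (simp add: numeral_power_le_of_nat_cancel_iff)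
    then show ?thesis
      using primorial_pos[of n] by simp
  qed
  also have "\<dots> = ln 4 * real n"
    by (simp add: ln_realpow)
  also have "\<dots> \<le> ln 4 * x"
    using assms unfolding n_def by (intro mult_left_mono) auto
  finally show ?thesis .
qed

lemma finite_primes_le: "finite {p::nat. prime p \<and> real p \<le> x}"
  by (rule finite_subset[of _ "{..nat \<lfloor>x\<rfloor>}"]) (auto intro: le_nat_floor)

lemma card_primes_le:
  assumes "0 \<le> y"
  shows "real (card {p::nat. prime p \<and> real p \<le> y}) \<le> y"
proof -
  have "{p::nat. prime p \<and> real p \<le> y} \<subseteq> {1..nat \<lfloor>y\<rfloor>}"
    by (auto intro: le_nat_floor simp: Suc_le_eq prime_gt_0_nat)
  then have "real (card {p::nat. prime p \<and> real p \<le> y}) \<le> real (nat \<lfloor>y\<rfloor>)"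
    using card_mono[of "{1..nat \<lfloor>y\<rfloor>}"] by simp
  also have "\<dots> \<le> y"
    using assms by (rule of_nat_floor)
  finally show ?thesis .
qed

lemma exp_1_ge_27_10: "exp 1 \<ge> (27/10::real)"
proof -
  have "(27/10::real) \<le> (1 + 1 / real (100::nat)) ^ 100"
    by (simp add: power_divide)
  also have "\<dots> \<le> exp 1"
    by (rule exp_ge_one_plus_x_over_n_power_n) auto
  finally show ?thesis .
qed

lemma ln_powr_le_powr:
  fixes x b s :: real
  assumes "1 \<le> x" "0 < b" "0 < s"
  shows "ln x powr b \<le> (b / (exp 1 * s)) powr b * x powr s"
proof -
  define k where "k = s / b"
  have "ln (x powr k / exp 1) \<le> x powr k / exp 1 - 1"
    using assms by (intro ln_le_minus_one) simp
  then have "k * ln x \<le> x powr k / exp 1"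
    using assms by (simp add: ln_div ln_powr)
  then have "ln x \<le> b / (exp 1 * s) * x powr k"
    using assms unfolding k_def by (simp add: field_simps)
  then have "ln x powr b \<le> (b / (exp 1 * s) * x powr k) powr b"
    using assms by (intro powr_mono2) auto
  also have "\<dots> = (b / (exp 1 * s)) powr b * x powr s"
    using assms unfolding k_def by (subst powr_mult) (simp_all add: powr_powr)
  finally show ?thesis .
qed

lemma ln_powr_mult_cube_root_le:
  fixes x b :: real
  assumes "1 \<le> x" "0 < b"
  shows "ln x powr b * x powr (1/3) \<le> (3 * b / (2 * exp 1)) powr b * x"
proof -
  have eq: "b / (exp 1 * (2/3)) = 3 * b / (2 * exp 1)"
    by (simp add: field_simps)
  have "ln x powr b \<le> (3 * b / (2 * exp 1)) powr b * x powr (2/3)"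
    using ln_powr_le_powr[of x b "2/3", unfolded eq] assms by simp
  then have "ln x powr b * x powr (1/3) \<le> (3 * b / (2 * exp 1)) powr b * x powr (2/3) * x powr (1/3)"
    by (rule mult_right_mono) simp
  also have "\<dots> = (3 * b / (2 * exp 1)) powr b * x"
    using assms by (simp add: mult.assoc powr_add[symmetric])
  finally show ?thesis .
qed

lemma inverse_powr_le_split:
  fixes u c T A :: real
  assumes "0 < c" "c \<le> u" "0 < T" "0 \<le> A"
  shows "1 / u powr A \<le> u / T powr (A+1) + (if u \<le> T then 1 / c powr A else 0)"
proof (cases "u \<le> T")
  case True
  have "1 / u powr A \<le> 1 / c powr A"
    using assms by (intro divide_left_mono powr_mono2) auto
  moreover have "0 \<le> u / T powr (A+1)"
    using assms by simp
  ultimately show ?thesis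
    using True by simp
next
  case False
  have "1 / u powr A = u / u powr (A+1)"
    using assms by (simp add: powr_add)
  also have "\<dots> \<le> u / T powr (A+1)"
    using assms False by (intro divide_left_mono powr_mono2) auto
  finally show ?thesis
    using False by simp
qed

lemma sum_primes_inverse_ln_powr_le:
  fixes A x y :: real
  assumes "0 \<le> A" "1 < y" "0 \<le> x"
  shows "(\<Sum>p\<in>{p::nat. prime p \<and> real p \<le> x}. 1 / ln (real p) powr A)
           \<le> ln 4 * x / ln y powr (A+1) + y / ln 2 powr A"
proof -
  define P where "P = {p::nat. prime p \<and> real p \<le> x}"
  have term_le: "1 / ln (real p) powr A
      \<le> ln (real p) / ln y powr (A+1) + (if real p \<le> y then 1 / ln 2 powr A else 0)"
    if "p \<in> P" for p
  proof -
    have "2 \<le> p"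
      using that unfolding P_def by (simp add: prime_ge_2_nat)
    then have "ln (real p) \<le> ln y \<longleftrightarrow> real p \<le> y"
      using assms by simp
    with \<open>2 \<le> p\<close> show ?thesis
      using inverse_powr_le_split[of "ln 2" "ln (real p)" "ln y" A] assms by simp
  qed
  have theta: "(\<Sum>p\<in>P. ln (real p)) \<le> ln 4 * x"
    unfolding P_def using assms(3) by (rule sum_ln_primes_le)
  have small: "(\<Sum>p\<in>P. if real p \<le> y then 1 / ln 2 powr A else 0) \<le> y / ln 2 powr A"
  proof -
    have "(\<Sum>p\<in>P. if real p \<le> y then 1 / ln 2 powr A else 0)
        = real (card {p\<in>P. real p \<le> y}) / ln 2 powr A"
      using finite_primes_le unfolding P_def by (simp add: sum.inter_filter[symmetric])
    also have "\<dots> \<le> real (card {p::nat. prime p \<and> real p \<le> y}) / ln 2 powr A"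
      unfolding P_def by (intro divide_right_mono of_nat_mono card_mono finite_primes_le) auto
    also have "\<dots> \<le> y / ln 2 powr A"
      using assms by (intro divide_right_mono card_primes_le) auto
    finally show ?thesis .
  qed
  have "(\<Sum>p\<in>P. 1 / ln (real p) powr A)
      \<le> (\<Sum>p\<in>P. ln (real p)) / ln y powr (A+1) + (\<Sum>p\<in>P. if real p \<le> y then 1 / ln 2 powr A else 0)"
    using sum_mono[OF term_le] by (simp add: sum.distrib sum_divide_distrib)
  also have "\<dots> \<le> ln 4 * x / ln y powr (A+1) + y / ln 2 powr A"
    using theta small by (intro add_mono divide_right_mono) auto
  finally show ?thesis
    unfolding P_def .
qed

lemma succ_powr_le_exp_mult_powr:
  fixes A :: real
  assumes "0 < A"
  shows "(A + 1) powr A \<le> exp 1 * A powr A"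
proof -
  have "(A + 1) powr A = (A * (1 + 1/A)) powr A"
    using assms by (simp add: distrib_left)
  also have "\<dots> = A powr A * (1 + 1/A) powr A"
    using assms by (simp add: powr_mult)
  also have "\<dots> \<le> A powr A * exp 1"
    using exp_1_gt_powr[OF assms] by (intro mult_left_mono) auto
  finally show ?thesis
    by (simp add: mult.commute)
qed

lemma succ_mult_powr_5_12_le:
  fixes A :: real
  assumes "3 \<le> A"
  shows "(A + 1) * (5/12) powr A \<le> 4 * (5/12) powr 3"
proof -
  define t where "t = A - 3"
  have "ln 2 \<le> ln (12/5::real)"
    by simp
  then have "1 \<le> 4 * ln (12/5::real)"
    using ln2_ge_two_thirds by linarith
  then have "t * 1 \<le> t * (4 * ln (12/5))"
    using assms unfolding t_def by (intro mult_left_mono) auto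
  then have "A + 1 \<le> 4 * (1 + t * ln (12/5))"
    unfolding t_def by (simp add: algebra_simps)
  also have "1 + t * ln (12/5) \<le> (12/5::real) powr t"
    unfolding powr_def using exp_ge_add_one_self[of "t * ln (12/5)"] by simp
  finally have "(A + 1) * (5/12) powr t \<le> 4 * ((12/5) powr t * (5/12) powr t)"
    by (simp add: mult_right_mono)
  also have "(12/5::real) powr t * (5/12) powr t = 1"
    by (simp add: powr_mult[symmetric])
  finally have "(A + 1) * (5/12) powr t * (5/12) powr 3 \<le> 4 * (5/12) powr 3"
    by (simp add: mult_right_mono)
  moreover have "(5/12::real) powr A = (5/12) powr t * (5/12) powr 3"
    unfolding t_def by (subst powr_add[symmetric]) simp
  ultimately show ?thesis
    by (simp add: mult.assoc)
qed

lemma large_primes_constant_le: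
  fixes A :: real
  assumes "3 \<le> A"
  shows "ln 4 * 3 powr (A + 1) \<le> 25/48 * (2 * A) powr A"
proof -
  have "ln (4::real) = 2 * ln 2"
    using ln_realpow[of 2 2] by simp
  then have "ln (4::real) \<le> 25/18"
    using ln2_le_25_over_36 by linarith
  moreover have "3 powr (A + 1) \<le> 3 * A powr A"
    using assms by (simp add: powr_add powr_mono2)
  ultimately have "ln 4 * 3 powr (A + 1) \<le> 25/18 * (3 * A powr A)"
    by (intro mult_mono) auto
  also have "\<dots> = 25/48 * (8 * A powr A)"
    by simp
  also have "8 * A powr A \<le> (2 * A) powr A"
  proof -
    have "(2::real) powr 3 \<le> 2 powr A"
      using assms by (intro powr_mono) auto
    then show ?thesis
      using assms by (simp add: powr_mult powr_numeral)
  qed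
  finally show ?thesis
    by simp
qed

lemma small_primes_constant_le:
  fixes A :: real
  assumes "3 \<le> A"
  shows "(3 * (A + 1) / (2 * exp 1)) powr (A + 1) / ln 2 powr A \<le> 125/288 * (2 * A) powr A"
proof -
  define e l where "e = exp (1::real)" and "l = ln (2::real)"
  have e: "27/10 \<le> e" and l: "2/3 \<le> l"
    unfolding e_def l_def using exp_1_ge_27_10 ln2_ge_two_thirds by auto
  have "27/10 * (2/3) \<le> e * l"
    using e l by (intro mult_mono) auto
  then have el: "3 / (2 * e * l) \<le> 5/6"
    using e l by (simp add: field_simps)
  define b where "b = 3 * (A + 1) / (2 * e)"
  have "b / l = 3 / (2 * e * l) * (A + 1)"
    unfolding b_def by (simp add: field_simps)
  have b: "0 < b"
    using e assms unfolding b_def by simp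
  have "b powr (A + 1) / l powr A = b * (b powr A / l powr A)"
    using b by (simp add: powr_add)
  also have "b powr A / l powr A = (b / l) powr A"
    using b l by (simp add: powr_divide)
  also have "\<dots> = (3 / (2 * e * l)) powr A * (A + 1) powr A"
    unfolding \<open>b / l = _\<close> using e l assms by (intro powr_mult)
  also have "b * ((3 / (2 * e * l)) powr A * (A + 1) powr A) \<le> b * ((5/6) powr A * (e * A powr A))"
    using b e l el assms succ_powr_le_exp_mult_powr[of A, folded e_def]
    by (intro mult_left_mono mult_mono powr_mono2) auto
  also have "\<dots> = 3/2 * ((A + 1) * (5/12) powr A) * (2 * A) powr A"
  proof -
    have "(5/6) powr A * A powr A = (5/12) powr A * (2 * A) powr A"
      using assms by (simp add: powr_mult[symmetric])
    then show ?thesis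
      using e unfolding b_def by (simp add: field_simps)
  qed
  also have "\<dots> \<le> 3/2 * (4 * (5/12) powr 3) * (2 * A) powr A"
    using succ_mult_powr_5_12_le[OF assms] by (intro mult_right_mono mult_left_mono) auto
  also have "\<dots> = 125/288 * (2 * A) powr A"
    by (simp add: powr_numeral power_divide)
  finally show ?thesis
    unfolding b_def e_def l_def .
qed

lemma primes_constants_sum_lt:
  fixes A :: real
  assumes "3 \<le> A"
  shows "ln 4 * 3 powr (A + 1) + (3 * (A + 1) / (2 * exp 1)) powr (A + 1) / ln 2 powr A
           < (2 * A) powr A"
proof -
  have "0 < (2 * A) powr A"
    using assms by simp
  then show ?thesis
    using large_primes_constant_le[OF assms] small_primes_constant_le[OF assms] by linarith
qed

theorem lemma5:
  fixes \<alpha> x :: real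
  assumes "\<alpha> \<ge> 3" and "x > 1"
  shows "(\<Sum>p\<in>{p::nat. prime p \<and> real p \<le> x}. 1 / (ln (real p)) powr \<alpha>)
           < (2 * \<alpha>) powr \<alpha> * x / (ln x) powr (\<alpha> + 1)"
proof -
  define L where "L = ln x"
  define y where "y = x powr (1/3)"
  define K where "K = (3 * (\<alpha> + 1) / (2 * exp 1)) powr (\<alpha> + 1)"
  have L: "0 < L"
    unfolding L_def using assms by simp
  have y: "1 < y" "ln y = L / 3"
    unfolding y_def L_def using assms by (auto simp: ln_powr)
  have "(\<Sum>p\<in>{p::nat. prime p \<and> real p \<le> x}. 1 / ln (real p) powr \<alpha>)
      \<le> ln 4 * x / (L / 3) powr (\<alpha> + 1) + y / ln 2 powr \<alpha>"
    using sum_primes_inverse_ln_powr_le[of \<alpha> y x] assms y by simp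
  also have "\<dots> = (ln 4 * 3 powr (\<alpha> + 1) * x + L powr (\<alpha> + 1) * y / ln 2 powr \<alpha>) / L powr (\<alpha> + 1)"
    using L by (simp add: powr_divide field_simps)
  also have "\<dots> \<le> (ln 4 * 3 powr (\<alpha> + 1) + K / ln 2 powr \<alpha>) * x / L powr (\<alpha> + 1)"
    using ln_powr_mult_cube_root_le[of x "\<alpha> + 1"] assms unfolding L_def y_def K_def
    by (intro divide_right_mono) (auto simp: field_simps)
  also have "\<dots> < (2 * \<alpha>) powr \<alpha> * x / L powr (\<alpha> + 1)"
    using primes_constants_sum_lt[of \<alpha>] L assms unfolding K_def
    by (intro divide_strict_right_mono mult_strict_right_mono) auto
  finally show ?thesis
    unfolding L_def .
qed

end
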